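(* Assume $\mathfrak I$ is compact and $\psi$ is as below. Then for all $n\ge0$ and $1\le k,l\le n+1$, $$\sum_{i\ge0}\Psi^{n,n+1}_{n+1-k}(i)\,\mathcal E^{n,n+1}_{n+1-l}(i)=\delta_{k,l},$$ and for all $n\ge1$ and $1\le k,l\le n$, $$\sum_{i\ge0}\Psi^{n,n}_{n-k}(i)\,\mathcal E^{n,n}_{n-l}(i)=\delta_{k,l}.$$
   Context: Let $\lambda_k=\lambda(k)>0$ ($k\ge0$) and $\mu_k=\mu(k)$ with $\mu_0=0$, $\mu_k>0$ ($k\ge1$) be the rates of a birth and death chain on $\mathbb N=\{0,1,\dots\}$ reflecting at $0$, with $\pi_0=1$, $\pi_k=\prod_{i=1}^k\lambda_{i-1}/\mu_i$, and satisfying $\sum_{j\ge0}\frac{1}{\lambda_j\pi_j}\sum_{i=0}^{j}\pi_i=\sum_{j\ge0}\frac{1}{\lambda_j\pi_j}\sum_{i>j}\pi_i=\infty$. Dual rates: $\hat\lambda_k=\mu_{k+1}$, $\hat\mu_k=\lambda_k$; $\hat\pi_0=1$, $\hat\pi_k=\prod_{i=1}^k\mu_i/\lambda_i$. Polynomials $Q_n,\hat Q_n$ (degree $n$) are defined by $Q_{-1}=\hat Q_{-1}=0$, $Q_0=\hat Q_0=1$ and, for $n\ge0$, $-xQ_n(x)=\mu_nQ_{n-1}(x)-(\lambda_n+\mu_n)Q_n(x)+\lambda_nQ_{n+1}(x)$ and $-x\hat Q_n(x)=\lambda_n\hat Q_{n-1}(x)-(\mu_{n+1}+\lambda_n)\hat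 Q_n(x)+\mu_{n+1}\hat Q_{n+1}(x)$. Assume both associated moment problems are determinate: there are unique probability measures $\mathfrak w,\hat{\mathfrak w}$ on $[0,\infty)$ with $\int Q_iQ_j\,d\mathfrak w=\delta_{ij}/\pi_j$ and $\int\hat Q_i\hat Q_j\,d\hat{\mathfrak w}=\delta_{ij}/\hat\pi_j$; then $d\hat{\mathfrak w}(x)=x\,d\mathfrak w(x)/\lambda_0$ and both measures have the same support $\mathfrak I=[I^-,I^+]\subset[0,\infty]$. Write $\langle f,g\rangle_{\mathsf m}=\int f(x)g(x)\,d\mathsf m(x)$. Let $C=\sup_i(\lambda_i+\mu_i)$, $\hat C=\sup_i(\hat\lambda_i+\hat\mu_i)$ (finite) and $\psi(x)=\prod_{i=1}^{\mathfrak N}(1-\alpha_ix)e^{-tx}$ with $\mathfrak N\in\mathbb N$, $t\ge0$, $\frac12\min(1/C,1/\hat C)\ge\alpha_1\ge\dots\ge\alpha_{\mathfrak N}\ge0$. $\mathsf C(\mathfrak I)$ is a positively oriented simple closed contour enclosing $[0,I^+]$ and no zero of $\psi$. For $i\in\mathbb N$ and $1\le j\le n+1$ (resp. $1\le j\le n$): $\Psi^{n,n+1}_{n+1-j}(i)=\langle\pi_iQ_i,(-x)^{n+1-j}\psi\rangle_{\mathfrak w}$, $\Psi^{n,n}_{n-j}(i)=\langle\hat\pi_i\hat Q_i,(-x)^{n-j}\psi\rangle_{\hat{\mathfrak w}}$, $\mathcal E^{n,n+1}_{n+1-j}(i)=-\frac1{2\pi\mathrm i}\oint_{\mathsf C(\mathfrak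 I)}\frac{Q_i(u)}{\psi(u)(-u)^{n+2-j}}du$, $\mathcal E^{n,n}_{n-j}(i)=-\frac1{2\pi\mathrm i}\oint_{\mathsf C(\mathfrak I)}\frac{\hat Q_i(u)}{\psi(u)(-u)^{n-j+1}}du$. *)

theory Defs
  imports "HOL-Analysis.Analysis" "HOL-Probability.Probability"
begin

definition has_cint :: "(complex \<Rightarrow> complex) \<Rightarrow> complex \<Rightarrow> (real \<Rightarrow> complex) \<Rightarrow> bool" where
  "has_cint f i g \<longleftrightarrow>
     ((\<lambda>x. f (g x) * vector_derivative g (at x within {0..1})) has_integral i) {0..1}"

definition cint :: "(real \<Rightarrow> complex) \<Rightarrow> (complex \<Rightarrow> complex) \<Rightarrow> complex" where
  "cint g f = (SOME i. has_cint f i g \<or> (\<not> (\<exists>j. has_cint f j g) \<and> i = 0))"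

text \<open>Positively oriented simple closed contour (valid, i.e. piecewise C1):
  every point enclosed by the curve has winding number +1.\<close>

definition pos_simple_closed_contour :: "(real \<Rightarrow> complex) \<Rightarrow> bool" where
  "pos_simple_closed_contour g \<longleftrightarrow>
     valid_path g \<and> simple_path g \<and> pathfinish g = pathstart g \<and>
     (\<forall>z \<in> inside (path_image g). cint g (\<lambda>w. 1 / (w - z)) = 2 * of_real pi * \<i>)"

definition bd_pi :: "(nat \<Rightarrow> real) \<Rightarrow> (nat \<Rightarrow> real) \<Rightarrow> nat \<Rightarrow> real" where
  "bd_pi lam mu k = (\<Prod>i = 1..k. lam (i - 1) / mu i)"

fun bdQ :: "(nat \<Rightarrow> real) \<Rightarrow> (nat \<Rightarrow> real) \<Rightarrow> nat \<Rightarrow> 'a::real_field \<Rightarrow> 'a" where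
  "bdQ lam mu 0 x = 1"
| "bdQ lam mu (Suc 0) x = (of_real (lam 0 + mu 0) - x) / of_real (lam 0)"
| "bdQ lam mu (Suc (Suc n)) x =
     ((of_real (lam (Suc n) + mu (Suc n)) - x) * bdQ lam mu (Suc n) x
       - of_real (mu (Suc n)) * bdQ lam mu n x) / of_real (lam (Suc n))"

text \<open>Dual rates: hat lam_k = mu_{k+1}, hat mu_k = lam_k. Then hat pi = bd_pi of the
  dual rates and hat Q = bdQ of the dual rates.\<close>

definition dual_lam :: "(nat \<Rightarrow> real) \<Rightarrow> (nat \<Rightarrow> real) \<Rightarrow> nat \<Rightarrow> real" where
  "dual_lam lam mu k = mu (Suc k)"

definition dual_mu :: "(nat \<Rightarrow> real) \<Rightarrow> (nat \<Rightarrow> real) \<Rightarrow> nat \<Rightarrow> real" where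
  "dual_mu lam mu k = lam k"

definition orth_measure :: "(nat \<Rightarrow> real) \<Rightarrow> (nat \<Rightarrow> real) \<Rightarrow> real measure \<Rightarrow> bool" where
  "orth_measure lam mu m \<longleftrightarrow>
     prob_space m \<and> sets m = sets borel \<and> (AE x in m. 0 \<le> x) \<and>
     (\<forall>i j. integrable m (\<lambda>x. bdQ lam mu i x * bdQ lam mu j x) \<and>
        (\<integral>x. bdQ lam mu i x * bdQ lam mu j x \<partial>m) = (if i = j then 1 / bd_pi lam mu j else 0))"

definition msupport :: "real measure \<Rightarrow> real set" where
  "msupport m = {x. \<forall>e>0. emeasure m (ball x e) > 0}"

definition psi :: "(nat \<Rightarrow> real) \<Rightarrow> nat \<Rightarrow> real \<Rightarrow> 'a::{real_normed_field,banach} \<Rightarrow> 'a" where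
  "psi alpha N t x = (\<Prod>i = 1..N. 1 - of_real (alpha i) * x) * exp (- (of_real t * x))"

end

theory Submission
  imports Defs "HOL-Complex_Analysis.Complex_Analysis"
begin

text \<open>Write Psi(i) = pi_i * integral Q_i(x) (-x)^a psi(x) dw(x). By orthogonality these are the
  coefficients of (-u)^a psi(u) in the basis Q_i, and bounded rates make the expansion converge
  uniformly on every disc: (-u)^k = sum_{i<=k} c(k,i) Q_i(u) with
  sum_i |c(k,i)| |Q_i(u)| <= (|u| + 2C)^k, while the factor exp(-tu) of psi is handled through its
  power series. The integrand Q_i(u) / (psi(u) (-u)^l) has its only pole inside the contour at 0,
  so the contour may be shrunk to a small circle; there summation and integration commute and
  -1/(2 pi i) times the integral of (-u)^k / (-u)^l is delta_kl. The dual statement is the same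
  argument applied to the dual chain.\<close>

section \<open>Expanding powers in the orthogonal polynomials\<close>

lemma bdQ_three_term:
  fixes x :: "'a::real_field"
  assumes "lam i \<noteq> 0"
  shows "- x * bdQ lam mu i x = (if i = 0 then 0 else of_real (mu i) * bdQ lam mu (i - 1) x)
          - of_real (lam i + mu i) * bdQ lam mu i x + of_real (lam i) * bdQ lam mu (Suc i) x"
  using assms by (cases i) (simp_all add: field_simps)

lemma sum_tridiagonal_transpose:
  fixes W f A B D :: "nat \<Rightarrow> 'a::comm_ring_1"
  assumes "\<And>j. j \<ge> n \<Longrightarrow> W j = 0"
  shows "(\<Sum>j<Suc n. W j * ((if j = 0 then 0 else A j * f (j - 1)) + B j * f j + D j * f (Suc j)))
       = (\<Sum>i<Suc n. ((if i = 0 then 0 else D (i - 1) * W (i - 1)) + B i * W i + A (Suc i) * W (Suc i)) * f i)"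
proof -
  have lower: "(\<Sum>j<Suc n. W j * (if j = 0 then 0 else A j * f (j - 1)))
      = (\<Sum>i<Suc n. A (Suc i) * W (Suc i) * f i)"
    using assms[of "Suc n"] by (subst sum.lessThan_Suc_shift) (simp add: algebra_simps)
  have upper: "(\<Sum>j<Suc n. W j * (D j * f (Suc j)))
      = (\<Sum>i<Suc n. (if i = 0 then 0 else D (i - 1) * W (i - 1)) * f i)"
    using assms[of n] by (subst (2) sum.lessThan_Suc_shift) (simp add: algebra_simps)
  show ?thesis
    using lower upper by (simp add: sum.distrib algebra_simps)
qed

text \<open>\<open>pow_coeff lam mu k i\<close> is the coefficient of Q_i in (-x)^k; its recursion comes from
  multiplying by -x and applying the three-term recurrence. \<open>pow_coeff_majorant\<close> is the same
  recursion with all signs made positive.\<close>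

fun pow_coeff :: "(nat \<Rightarrow> real) \<Rightarrow> (nat \<Rightarrow> real) \<Rightarrow> nat \<Rightarrow> nat \<Rightarrow> real" where
  "pow_coeff lam mu 0 i = (if i = 0 then 1 else 0)"
| "pow_coeff lam mu (Suc k) i = (if i = 0 then 0 else lam (i - 1) * pow_coeff lam mu k (i - 1))
     - (lam i + mu i) * pow_coeff lam mu k i + mu (Suc i) * pow_coeff lam mu k (Suc i)"

fun pow_coeff_majorant :: "(nat \<Rightarrow> real) \<Rightarrow> (nat \<Rightarrow> real) \<Rightarrow> nat \<Rightarrow> nat \<Rightarrow> real" where
  "pow_coeff_majorant lam mu 0 i = (if i = 0 then 1 else 0)"
| "pow_coeff_majorant lam mu (Suc k) i = (if i = 0 then 0 else lam (i - 1) * pow_coeff_majorant lam mu k (i - 1))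
     + (lam i + mu i) * pow_coeff_majorant lam mu k i + mu (Suc i) * pow_coeff_majorant lam mu k (Suc i)"

lemma pow_coeff_eq_0: "k < i \<Longrightarrow> pow_coeff lam mu k i = 0"
  by (induction k arbitrary: i) auto

lemma pow_coeff_majorant_eq_0: "k < i \<Longrightarrow> pow_coeff_majorant lam mu k i = 0"
  by (induction k arbitrary: i) auto

lemma power_eq_sum_pow_coeff_bdQ:
  fixes x :: "'a::real_field"
  assumes lam: "\<And>i. lam i \<noteq> 0"
  shows "(- x) ^ k = (\<Sum>i<Suc k. of_real (pow_coeff lam mu k i) * bdQ lam mu i x)"
proof (induction k)
  case 0
  then show ?case by simp
next
  case (Suc k)
  have "(- x) ^ Suc k = (\<Sum>i<Suc k. of_real (pow_coeff lam mu k i) * (- x * bdQ lam mu i x))"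
    by (simp add: Suc sum_distrib_left algebra_simps)
  also have "\<dots> = (\<Sum>i<Suc k. of_real (pow_coeff lam mu k i) *
      ((if i = 0 then 0 else of_real (mu i) * bdQ lam mu (i - 1) x)
          + (- of_real (lam i + mu i)) * bdQ lam mu i x + of_real (lam i) * bdQ lam mu (Suc i) x))"
    by (intro sum.cong refl, subst bdQ_three_term[OF lam]) (simp add: algebra_simps)
  also have "\<dots> = (\<Sum>i<Suc (Suc k). of_real (pow_coeff lam mu k i) *
      ((if i = 0 then 0 else of_real (mu i) * bdQ lam mu (i - 1) x)
          + (- of_real (lam i + mu i)) * bdQ lam mu i x + of_real (lam i) * bdQ lam mu (Suc i) x))"
    by (simp add: pow_coeff_eq_0)
  also have "\<dots> = (\<Sum>i<Suc (Suc k).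
       ((if i = 0 then 0 else of_real (lam (i - 1)) * of_real (pow_coeff lam mu k (i - 1)))
         + (- of_real (lam i + mu i)) * of_real (pow_coeff lam mu k i)
         + of_real (mu (Suc i)) * of_real (pow_coeff lam mu k (Suc i)))
       * bdQ lam mu i x)"
    by (rule sum_tridiagonal_transpose) (simp add: pow_coeff_eq_0)
  also have "\<dots> = (\<Sum>i<Suc (Suc k). of_real (pow_coeff lam mu (Suc k) i) * bdQ lam mu i x)"
    by (intro sum.cong refl) (simp add: algebra_simps)
  finally show ?case .
qed

definition bdQ_step :: "(nat \<Rightarrow> real) \<Rightarrow> (nat \<Rightarrow> real) \<Rightarrow> nat \<Rightarrow> 'a::real_field \<Rightarrow> 'a" where
  "bdQ_step lam mu i u = bdQ lam mu (Suc i) u - bdQ lam mu i u"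

lemma bdQ_step_recurrence:
  fixes u :: "'a::real_field"
  assumes "lam i \<noteq> 0"
  shows "of_real (lam i) * bdQ_step lam mu i u =
     (if i = 0 then of_real (mu 0) else of_real (mu i) * bdQ_step lam mu (i - 1) u) - u * bdQ lam mu i u"
proof (cases i)
  case 0
  then show ?thesis using assms by (simp add: bdQ_step_def field_simps)
next
  case (Suc n)
  then show ?thesis
    using bdQ_three_term[of lam i u mu, OF assms] by (simp del: bdQ.simps add: bdQ_step_def algebra_simps)
qed

text \<open>On the disc of radius \<open>\<rho>\<close> the polynomials and their increments are dominated by their
  values at \<open>-\<rho>\<close>, where the recursion has only nonnegative terms.\<close>

lemma norm_bdQ_le_bdQ_neg:
  fixes u :: "'a::real_normed_field"
  assumes lam: "\<And>i. lam i > 0" and mu: "\<And>i. mu i \<ge> 0" and u: "norm u \<le> \<rho>"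
  shows "norm (bdQ lam mu i u) \<le> bdQ lam mu i (- \<rho>) \<and> norm (bdQ_step lam mu i u) \<le> bdQ_step lam mu i (- \<rho>)"
proof (induction i)
  case 0
  have "lam 0 * norm (bdQ_step lam mu 0 u) = norm (of_real (lam 0) * bdQ_step lam mu 0 u)"
    using lam[of 0] by (simp add: norm_mult)
  also have "\<dots> = norm (of_real (mu 0) - u)"
    using bdQ_step_recurrence[of lam 0 mu u] lam[of 0] by simp
  also have "\<dots> \<le> mu 0 + \<rho>"
    by (rule order_trans[OF norm_triangle_ineq4]) (use mu[of 0] u in simp)
  also have "\<dots> = lam 0 * bdQ_step lam mu 0 (- \<rho>)"
    using bdQ_step_recurrence[of lam 0 mu "-\<rho>"] lam[of 0] by simp
  finally show ?case using lam[of 0] by simp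
next
  case (Suc i)
  have r0: "0 \<le> \<rho>" using u norm_ge_zero order_trans by blast
  have q: "norm (bdQ lam mu (Suc i) u) \<le> bdQ lam mu (Suc i) (- \<rho>)"
    using Suc.IH norm_triangle_ineq[of "bdQ lam mu i u" "bdQ_step lam mu i u"]
    by (simp add: bdQ_step_def)
  have "lam (Suc i) * norm (bdQ_step lam mu (Suc i) u) = norm (of_real (lam (Suc i)) * bdQ_step lam mu (Suc i) u)"
    using lam[of "Suc i"] by (simp add: norm_mult)
  also have "\<dots> = norm (of_real (mu (Suc i)) * bdQ_step lam mu i u - u * bdQ lam mu (Suc i) u)"
    using bdQ_step_recurrence[of lam "Suc i" mu u] lam[of "Suc i"] by (simp del: bdQ.simps)
  also have "\<dots> \<le> mu (Suc i) * norm (bdQ_step lam mu i u) + norm u * norm (bdQ lam mu (Suc i) u)"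
    by (rule order_trans[OF norm_triangle_ineq4]) (use mu[of "Suc i"] in \<open>simp add: norm_mult\<close>)
  also have "\<dots> \<le> mu (Suc i) * bdQ_step lam mu i (- \<rho>) + \<rho> * bdQ lam mu (Suc i) (- \<rho>)"
    by (intro add_mono mult_mono) (use Suc.IH mu[of "Suc i"] u q r0 in auto)
  also have "\<dots> = lam (Suc i) * bdQ_step lam mu (Suc i) (- \<rho>)"
    using bdQ_step_recurrence[of lam "Suc i" mu "-\<rho>"] lam[of "Suc i"] by (simp del: bdQ.simps)
  finally show ?case using q lam[of "Suc i"] by simp
qed

lemma bdQ_neg_ge_1:
  assumes lam: "\<And>i. lam i > 0" and mu: "\<And>i. mu i \<ge> 0" and r: "0 \<le> (\<rho>::real)"
  shows "1 \<le> bdQ lam mu i (- \<rho>)"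
proof (induction i)
  case (Suc i)
  have "0 \<le> bdQ_step lam mu i (- \<rho>)"
    using norm_bdQ_le_bdQ_neg[of lam mu "-\<rho>" \<rho> i, OF lam mu] r norm_ge_zero order_trans by force
  then show ?case using Suc by (simp add: bdQ_step_def)
qed simp

lemma pow_coeff_majorant_nonneg:
  assumes "\<And>i. lam i \<ge> 0" and "\<And>i. mu i \<ge> 0"
  shows "0 \<le> pow_coeff_majorant lam mu k i"
  by (induction k arbitrary: i) (auto intro!: add_nonneg_nonneg mult_nonneg_nonneg simp: assms)

lemma abs_pow_coeff_le_majorant:
  assumes lam: "\<And>i. lam i \<ge> 0" and mu: "\<And>i. mu i \<ge> 0"
  shows "\<bar>pow_coeff lam mu k i\<bar> \<le> pow_coeff_majorant lam mu k i"
proof (induction k arbitrary: i)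
  case (Suc k)
  have "\<bar>(if i = 0 then 0 else lam (i - 1) * pow_coeff lam mu k (i - 1))\<bar>
      \<le> (if i = 0 then 0 else lam (i - 1) * pow_coeff_majorant lam mu k (i - 1))"
    using Suc.IH lam by (auto simp: abs_mult intro: mult_left_mono)
  moreover have "\<bar>(lam i + mu i) * pow_coeff lam mu k i\<bar> \<le> (lam i + mu i) * pow_coeff_majorant lam mu k i"
    using Suc.IH[of i] lam[of i] mu[of i] by (simp add: abs_mult mult_left_mono)
  moreover have "\<bar>mu (Suc i) * pow_coeff lam mu k (Suc i)\<bar> \<le> mu (Suc i) * pow_coeff_majorant lam mu k (Suc i)"
    using Suc.IH[of "Suc i"] mu[of "Suc i"] by (simp add: abs_mult mult_left_mono)
  ultimately show ?case unfolding pow_coeff.simps pow_coeff_majorant.simps by (smt (verit))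
qed simp

lemma sum_majorant_bdQ_neg_le:
  assumes lam: "\<And>i. lam i > 0" and mu: "\<And>i. mu i \<ge> 0" and C: "\<And>i. lam i + mu i \<le> C"
    and r: "0 \<le> (\<rho>::real)"
  shows "(\<Sum>i<Suc k. pow_coeff_majorant lam mu k i * bdQ lam mu i (- \<rho>)) \<le> (\<rho> + 2 * C) ^ k"
proof (induction k)
  case (Suc k)
  define f where "f i = bdQ lam mu i (- \<rho>)" for i
  have step: "(if i = 0 then 0 else mu i * f (i - 1)) + (lam i + mu i) * f i + lam i * f (Suc i)
      \<le> (\<rho> + 2 * C) * f i" for i
  proof -
    have "(if i = 0 then 0 else mu i * f (i - 1)) + (lam i + mu i) * f i + lam i * f (Suc i)
        = \<rho> * f i + 2 * ((lam i + mu i) * f i)"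
      unfolding f_def using bdQ_three_term[of lam i "-\<rho>" mu] lam[of i] by simp
    also have "\<dots> \<le> \<rho> * f i + 2 * (C * f i)"
      using C[of i] bdQ_neg_ge_1[where lam=lam and mu=mu and i=i, OF lam mu r] by (simp add: f_def)
    finally show ?thesis by (simp add: algebra_simps)
  qed
  have "(\<Sum>i<Suc (Suc k). pow_coeff_majorant lam mu (Suc k) i * f i)
     = (\<Sum>j<Suc (Suc k). pow_coeff_majorant lam mu k j *
       ((if j = 0 then 0 else mu j * f (j - 1)) + (lam j + mu j) * f j + lam j * f (Suc j)))"
    by (subst sum_tridiagonal_transpose) (simp_all add: pow_coeff_majorant_eq_0)
  also have "\<dots> \<le> (\<Sum>j<Suc (Suc k). pow_coeff_majorant lam mu k j * ((\<rho> + 2 * C) * f j))"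
    using lam mu less_imp_le
    by (intro sum_mono mult_left_mono step pow_coeff_majorant_nonneg) auto
  also have "\<dots> = (\<rho> + 2 * C) * (\<Sum>j<Suc k. pow_coeff_majorant lam mu k j * f j)"
    by (simp add: sum_distrib_left pow_coeff_majorant_eq_0 algebra_simps)
  also have "\<dots> \<le> (\<rho> + 2 * C) * (\<rho> + 2 * C) ^ k"
    using Suc C[of 0] lam[of 0] mu[of 0] r by (intro mult_left_mono) (simp_all add: f_def)
  finally show ?case by (simp add: f_def)
qed simp

lemma sum_abs_pow_coeff_norm_bdQ_le:
  fixes u :: "'a::real_normed_field"
  assumes lam: "\<And>i. lam i > 0" and mu: "\<And>i. mu i \<ge> 0" and C: "\<And>i. lam i + mu i \<le> C"
    and u: "norm u \<le> \<rho>"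
  shows "(\<Sum>i<Suc k. \<bar>pow_coeff lam mu k i\<bar> * norm (bdQ lam mu i u)) \<le> (\<rho> + 2 * C) ^ k"
proof -
  have "(\<Sum>i<Suc k. \<bar>pow_coeff lam mu k i\<bar> * norm (bdQ lam mu i u))
      \<le> (\<Sum>i<Suc k. pow_coeff_majorant lam mu k i * bdQ lam mu i (- \<rho>))"
    using lam mu less_imp_le norm_bdQ_le_bdQ_neg[OF lam mu u]
    by (intro sum_mono mult_mono abs_pow_coeff_le_majorant pow_coeff_majorant_nonneg) auto
  also have "\<dots> \<le> (\<rho> + 2 * C) ^ k"
    using u norm_ge_zero order_trans by (intro sum_majorant_bdQ_neg_le[OF lam mu C]) blast
  finally show ?thesis .
qed

lemma abs_pow_coeff_0_le:
  assumes lam: "\<And>i. lam i > 0" and mu: "\<And>i. mu i \<ge> 0" and C: "\<And>i. lam i + mu i \<le> C"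
  shows "\<bar>pow_coeff lam mu k 0\<bar> \<le> (2 * C) ^ k"
  using member_le_sum[of 0 "{..<Suc k}" "\<lambda>i. \<bar>pow_coeff lam mu k i\<bar> * norm (bdQ lam mu i (0::real))"]
    sum_abs_pow_coeff_norm_bdQ_le[where lam=lam and mu=mu and u="0::real" and \<rho>=0 and k=k, OF lam mu C]
  by simp

lemma norm_truncated_power_expansion_le:
  fixes u :: "'a::real_normed_field"
  assumes lam: "\<And>i. lam i > 0" and mu: "\<And>i. mu i \<ge> 0" and C: "\<And>i. lam i + mu i \<le> C"
    and u: "norm u \<le> \<rho>"
  shows "norm ((\<Sum>i<M. of_real (pow_coeff lam mu k i) * bdQ lam mu i u) - (- u) ^ k)
      \<le> (if k < M then 0 else 2 * (\<rho> + 2 * C) ^ k)"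
proof (cases "k < M")
  case True
  have "(\<Sum>i<M. of_real (pow_coeff lam mu k i) * bdQ lam mu i u)
      = (\<Sum>i<Suc k. of_real (pow_coeff lam mu k i) * bdQ lam mu i u)"
    by (rule sum.mono_neutral_right) (use True in \<open>auto simp: pow_coeff_eq_0\<close>)
  then show ?thesis
    using True power_eq_sum_pow_coeff_bdQ[of lam u k mu] lam by (simp add: less_imp_neq[symmetric])
next
  case False
  have r: "0 \<le> \<rho>" using u norm_ge_zero order_trans by blast
  have "norm ((\<Sum>i<M. of_real (pow_coeff lam mu k i) * bdQ lam mu i u) - (- u) ^ k)
     \<le> (\<Sum>i<M. \<bar>pow_coeff lam mu k i\<bar> * norm (bdQ lam mu i u)) + norm u ^ k"
    by (rule order_trans[OF norm_triangle_ineq4], rule add_mono,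
        rule order_trans[OF norm_sum], auto simp: norm_mult norm_power)
  also have "\<dots> \<le> (\<Sum>i<Suc k. \<bar>pow_coeff lam mu k i\<bar> * norm (bdQ lam mu i u)) + \<rho> ^ k"
    by (intro add_mono sum_mono2 power_mono u) (use False in auto)
  also have "\<dots> \<le> (\<rho> + 2 * C) ^ k + (\<rho> + 2 * C) ^ k"
    using r C[of 0] lam[of 0] mu[of 0]
    by (intro add_mono sum_abs_pow_coeff_norm_bdQ_le[OF lam mu C u] power_mono) auto
  finally show ?thesis using False by simp
qed

section \<open>The exponential series and the expansion of \<open>psi\<close>\<close>

lemma power_exp_sums:
  fixes y :: "'a::{real_normed_field,banach}"
  shows "(\<lambda>j. of_real (t ^ j / fact j) * y ^ (q + j)) sums (y ^ q * exp (of_real t * y))"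
proof -
  have "(\<lambda>j. y ^ q * ((of_real t * y) ^ j /\<^sub>R fact j)) sums (y ^ q * exp (of_real t * y))"
    by (intro sums_mult exp_converges)
  moreover have "y ^ q * ((of_real t * y) ^ j /\<^sub>R fact j) = of_real (t ^ j / fact j) * y ^ (q + j)" for j
    by (simp add: scaleR_conv_of_real power_add power_mult_distrib divide_inverse mult_ac)
  ultimately show ?thesis by simp
qed

definition exp_tail :: "real \<Rightarrow> nat \<Rightarrow> real" where
  "exp_tail s J = exp s - (\<Sum>j<J. s ^ j / fact j)"

lemma exp_tail_sums: "(\<lambda>j. if J \<le> j then s ^ j / fact j else 0) sums exp_tail s J"
proof -
  have "(\<lambda>j. s ^ j / fact j - (if j \<in> {..<J} then s ^ j / fact j else 0)) sums exp_tail s J"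
    unfolding exp_tail_def
    using power_exp_sums[where y=s and q=0 and t=1] by (intro sums_diff sums_If_finite_set) simp_all
  moreover have "(\<lambda>j. s ^ j / fact j - (if j \<in> {..<J} then s ^ j / fact j else 0))
      = (\<lambda>j. if J \<le> j then s ^ j / fact j else 0)"
    by auto
  ultimately show ?thesis by simp
qed

lemma exp_tail_shift_tendsto_0: "(\<lambda>M. exp_tail s (M - q)) \<longlonglongrightarrow> 0"
proof -
  have "(\<lambda>J. exp_tail s J) \<longlonglongrightarrow> exp s - exp s"
    using power_exp_sums[where y=s and q=0 and t=1] unfolding exp_tail_def sums_def
    by (intro tendsto_diff tendsto_const) simp
  then show ?thesis by (intro filterlim_compose[OF _ filterlim_minus_const_nat_at_top]) simp
qed

text \<open>\<open>psi_coeff \<alpha> N p\<close> is the \<open>p\<close>-th elementary symmetric polynomial in \<open>\<alpha> 1, \<dots>, \<alpha> N\<close>.\<close>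

fun psi_coeff :: "(nat \<Rightarrow> real) \<Rightarrow> nat \<Rightarrow> nat \<Rightarrow> real" where
  "psi_coeff \<alpha> 0 p = (if p = 0 then 1 else 0)"
| "psi_coeff \<alpha> (Suc N) p = psi_coeff \<alpha> N p + \<alpha> (Suc N) * (if p = 0 then 0 else psi_coeff \<alpha> N (p - 1))"

lemma psi_coeff_eq_0: "N < p \<Longrightarrow> psi_coeff \<alpha> N p = 0"
  by (induction N arbitrary: p) auto

lemma prod_one_minus_eq_sum_psi_coeff:
  fixes x :: "'a::real_field"
  shows "(\<Prod>i = 1..N. 1 - of_real (\<alpha> i) * x) = (\<Sum>p<Suc N. of_real (psi_coeff \<alpha> N p) * (- x) ^ p)"
proof (induction N)
  case (Suc N)
  define c where "c p = (of_real (psi_coeff \<alpha> N p) :: 'a)" for p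
  define a where "a = (of_real (\<alpha> (Suc N)) :: 'a)"
  have "(\<Prod>i = 1..Suc N. 1 - of_real (\<alpha> i) * x)
      = (\<Prod>i = 1..N. 1 - of_real (\<alpha> i) * x) * (1 - of_real (\<alpha> (Suc N)) * x)"
    by (simp add: prod.cl_ivl_Suc)
  also have "\<dots> = (\<Sum>p<Suc N. c p * (- x) ^ p) * (1 + a * (- x))"
    unfolding Suc.IH by (simp add: c_def a_def)
  also have "\<dots> = (\<Sum>p<Suc N. c p * (- x) ^ p) + (\<Sum>p<Suc N. a * c p * (- x) ^ Suc p)"
    by (simp only: distrib_left mult_1_right sum_distrib_left sum_distrib_right) (simp add: mult_ac)
  also have "(\<Sum>p<Suc N. c p * (- x) ^ p) = (\<Sum>p<Suc (Suc N). c p * (- x) ^ p)"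
    by (simp add: c_def psi_coeff_eq_0)
  also have "(\<Sum>p<Suc N. a * c p * (- x) ^ Suc p)
      = (\<Sum>p<Suc (Suc N). (if p = 0 then 0 else a * c (p - 1)) * (- x) ^ p)"
    by (subst sum.lessThan_Suc_shift) simp
  finally show ?case
    by (simp only: sum.distrib[symmetric]) (auto intro!: sum.cong simp: c_def a_def algebra_simps)
qed simp

lemma psi_eq_sum_psi_coeff:
  fixes x :: "'a::{real_normed_field,banach}"
  shows "psi \<alpha> N t x = (\<Sum>p<Suc N. of_real (psi_coeff \<alpha> N p) * (- x) ^ p) * exp (- (of_real t * x))"
  unfolding psi_def prod_one_minus_eq_sum_psi_coeff ..

lemma uniform_limit_sum:
  fixes f :: "'i \<Rightarrow> 'n \<Rightarrow> 'a \<Rightarrow> 'b::real_normed_vector"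
  assumes "finite I" and "\<And>p. p \<in> I \<Longrightarrow> uniform_limit S (f p) (l p) F"
  shows "uniform_limit S (\<lambda>n x. \<Sum>p\<in>I. f p n x) (\<lambda>x. \<Sum>p\<in>I. l p x) F"
  using assms by (induction I rule: finite_induct) (auto intro!: uniform_limit_intros)

section \<open>Contour integrals\<close>

lemma cint_eqI:
  assumes "(f has_contour_integral I) g"
  shows "cint g f = I"
proof -
  have "has_cint f i g \<longleftrightarrow> (f has_contour_integral i) g" for i
    unfolding has_cint_def has_contour_integral_def ..
  then show ?thesis
    unfolding cint_def using assms has_contour_integral_unique by (intro some_equality) blast+
qed

lemma winding_number_eq_1_if_inside:
  assumes \<gamma>: "pos_simple_closed_contour \<gamma>" and z: "z \<in> inside (path_image \<gamma>)"
  shows "winding_number \<gamma> z = 1"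
proof -
  have vp: "valid_path \<gamma>" and cint: "cint \<gamma> (\<lambda>w. 1 / (w - z)) = 2 * of_real pi * \<i>"
    using \<gamma> z unfolding pos_simple_closed_contour_def by auto
  have nz: "z \<notin> path_image \<gamma>"
    using z inside_no_overlap by blast
  have "cint \<gamma> (\<lambda>w. 1 / (w - z)) = contour_integral \<gamma> (\<lambda>w. 1 / (w - z))"
    by (intro cint_eqI has_contour_integral_integral contour_integrable_inversediff vp nz)
  with cint have "contour_integral \<gamma> (\<lambda>w. 1 / (w - z)) = 2 * of_real pi * \<i>"
    by simp
  then show ?thesis
    using winding_number_valid_path[OF vp nz] by simp
qed

lemma winding_number_eq_0_if_outside:
  assumes \<gamma>: "pos_simple_closed_contour \<gamma>"
    and z: "z \<notin> inside (path_image \<gamma>)" "z \<notin> path_image \<gamma>"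
  shows "winding_number \<gamma> z = 0"
  using \<gamma> z by (intro winding_number_zero_in_outside)
    (auto simp: pos_simple_closed_contour_def valid_path_imp_path outside_inside)

lemma holomorphic_on_bdQ:
  assumes "\<And>i. lam i \<noteq> 0"
  shows "bdQ lam mu i holomorphic_on S"
proof -
  have "bdQ lam mu i holomorphic_on S \<and> bdQ lam mu (Suc i) holomorphic_on S"
    by (induction i) (use assms in \<open>auto intro!: holomorphic_intros\<close>)
  then show ?thesis ..
qed

lemma holomorphic_on_psi: "psi \<alpha> N t holomorphic_on S"
  unfolding psi_def by (intro holomorphic_intros holomorphic_on_prod)

lemma finite_psi_zeros: "finite {z::complex. psi \<alpha> N t z = 0}"
proof (rule finite_subset)
  show "{z::complex. psi \<alpha> N t z = 0} \<subseteq> (\<lambda>i. 1 / of_real (\<alpha> i)) ` {1..N}"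
  proof
    fix z :: complex
    assume "z \<in> {z. psi \<alpha> N t z = 0}"
    then obtain i where i: "i \<in> {1..N}" "1 - of_real (\<alpha> i) * z = 0"
      by (auto simp: psi_def prod_zero_iff)
    then have "z = 1 / of_real (\<alpha> i)"
      by (cases "\<alpha> i = 0") (auto simp: eq_divide_eq algebra_simps)
    with i show "z \<in> (\<lambda>i. 1 / of_real (\<alpha> i)) ` {1..N}" by blast
  qed
qed simp

text \<open>By the residue theorem both integrals equal 2 pi i times the residue at 0.\<close>

lemma contour_integral_eq_small_circlepath:
  fixes g :: "complex \<Rightarrow> complex" and Z :: "complex set"
  assumes Z: "finite Z" and r: "0 < r" "cball 0 r \<subseteq> - Z"
    and holo: "g holomorphic_on (- Z - {0})"
    and \<gamma>: "valid_path \<gamma>" "pathfinish \<gamma> = pathstart \<gamma>" "path_image \<gamma> \<subseteq> - Z - {0}"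
    and wZ: "\<And>z. z \<in> Z \<Longrightarrow> winding_number \<gamma> z = 0" and w0: "winding_number \<gamma> 0 = 1"
  shows "contour_integral \<gamma> g = contour_integral (circlepath 0 r) g"
proof -
  have op: "open (- Z)" using Z by (simp add: finite_imp_closed open_Compl)
  have "connected (UNIV - Z)"
    by (rule connected_open_diff_countable) (use Z in \<open>auto simp: countable_finite\<close>)
  then have co: "connected (- Z)"
    by (simp add: Compl_eq_Diff_UNIV)
  have "contour_integral \<gamma> g = 2 * pi * \<i> * (\<Sum>p\<in>{0}. winding_number \<gamma> p * residue g p)"
    by (rule Residue_theorem[OF op co _ holo \<gamma>]) (use wZ in auto)
  moreover have "contour_integral (circlepath 0 r) g
      = 2 * pi * \<i> * (\<Sum>p\<in>{0}. winding_number (circlepath 0 r) p * residue g p)"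
  proof (rule Residue_theorem[OF op co _ holo])
    show "path_image (circlepath 0 r) \<subseteq> - Z - {0}"
      using r by auto
    show "\<forall>z. z \<notin> - Z \<longrightarrow> winding_number (circlepath 0 r) z = 0"
      using r by (auto intro!: winding_number_zero_outside[where s="cball 0 r"])
  qed simp_all
  ultimately show ?thesis
    using w0 r by (simp add: winding_number_circlepath_centre)
qed

lemma cint_eq_small_circlepath:
  fixes g :: "complex \<Rightarrow> complex" and Z :: "complex set"
  assumes \<gamma>: "pos_simple_closed_contour \<gamma>" and inside0: "0 \<in> inside (path_image \<gamma>)"
    and Z: "finite Z" and Z_outside: "\<And>z. z \<in> Z \<Longrightarrow> z \<notin> inside (path_image \<gamma>) \<and> z \<notin> path_image \<gamma>"
    and r: "0 < r" "cball 0 r \<subseteq> - Z" and holo: "g holomorphic_on (- Z - {0})"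
  shows "cint \<gamma> g = contour_integral (circlepath 0 r) g"
proof -
  have vp: "valid_path \<gamma>" "pathfinish \<gamma> = pathstart \<gamma>"
    using \<gamma> by (auto simp: pos_simple_closed_contour_def)
  have pimg: "path_image \<gamma> \<subseteq> - Z - {0}"
    using Z_outside inside0 inside_no_overlap by fastforce
  have "cint \<gamma> g = contour_integral \<gamma> g"
    using Z by (intro cint_eqI has_contour_integral_integral contour_integrable_holomorphic_simple[OF holo _ vp(1) pimg])
      (auto intro!: open_Diff finite_imp_closed simp: open_Compl)
  also have "\<dots> = contour_integral (circlepath 0 r) g"
    using Z_outside winding_number_eq_0_if_outside[OF \<gamma>] winding_number_eq_1_if_inside[OF \<gamma> inside0]
    by (intro contour_integral_eq_small_circlepath[OF Z r holo vp pimg]) auto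
  finally show ?thesis .
qed

lemma circlepath_integral_power_quotient:
  assumes r: "0 < r"
  shows "((\<lambda>u. (- u) ^ a / (- u) ^ Suc b) has_contour_integral (if a = b then - (2 * pi * \<i>) else 0))
           (circlepath 0 r)"
proof (cases "b < a")
  case True
  have "((\<lambda>u. (- u) ^ (a - Suc b)) has_contour_integral 0) (circlepath 0 r)"
    by (rule Cauchy_theorem_convex_simple[where S=UNIV]) (auto intro!: holomorphic_intros)
  moreover have "(- u) ^ (a - Suc b) = (- u) ^ a / (- u) ^ Suc b"
    if "u \<in> path_image (circlepath 0 r)" for u :: complex
    using that True r by (intro power_diff) auto
  ultimately show ?thesis
    using True by (auto intro: has_contour_integral_eq)
next
  case False
  define k where "k = b - a"
  have "((\<lambda>u. (- 1) ^ Suc k / (u - 0) ^ Suc k) has_contour_integral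
      ((2 * pi * \<i>) / (fact k) * (deriv ^^ k) (\<lambda>u. (- 1) ^ Suc k) 0)) (circlepath 0 r)"
    by (rule Cauchy_has_contour_integral_higher_derivative_circlepath) (use r in auto)
  moreover have "(- 1) ^ Suc k / (u - 0) ^ Suc k = (- u) ^ a / (- u) ^ Suc b"
    if "u \<in> path_image (circlepath 0 r)" for u :: complex
  proof -
    have "u \<noteq> 0" using that r by auto
    moreover have "Suc b = Suc k + a" using False k_def by simp
    ultimately show ?thesis
      by (simp only: power_add) (simp add: power_minus[of u] divide_simps)
  qed
  moreover have "(2 * pi * \<i>) / (fact k) * (deriv ^^ k) (\<lambda>u. (- 1) ^ Suc k) (0::complex)
      = (if a = b then - (2 * pi * \<i>) else 0)"
    using False k_def by auto
  ultimately show ?thesis by (auto intro: has_contour_integral_eq)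
qed

section \<open>Support of the orthogonality measure\<close>

lemma emeasure_compact_eq_0_if_locally_null:
  fixes M :: "'a::metric_space measure"
  assumes sets: "sets M = sets borel" and K: "compact K"
    and null: "\<And>x. x \<in> K \<Longrightarrow> \<exists>r>0. emeasure M (ball x r) = 0"
  shows "emeasure M K = 0"
proof -
  obtain R where R: "\<And>x. x \<in> K \<Longrightarrow> R x > 0 \<and> emeasure M (ball x (R x)) = 0"
    using null by metis
  obtain D where D: "D \<subseteq> K" "finite D" "K \<subseteq> (\<Union>c\<in>D. ball c (R c))"
    using compactE_image[OF K, of K "\<lambda>c. ball c (R c)"] R by force
  have "emeasure M K \<le> emeasure M (\<Union>c\<in>D. ball c (R c))"
    using D sets by (intro emeasure_mono) auto
  also have "\<dots> \<le> (\<Sum>c\<in>D. emeasure M (ball c (R c)))"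
    using D sets by (intro emeasure_subadditive_finite) auto
  also have "\<dots> = 0"
    using D R by (intro sum.neutral) auto
  finally show ?thesis by simp
qed

lemma msupport_nonempty:
  assumes P: "prob_space M" and sets: "sets M = sets borel"
  shows "msupport M \<noteq> {}"
proof
  assume "msupport M = {}"
  then have "emeasure M (cball 0 (real n)) = 0" for n
    using sets by (intro emeasure_compact_eq_0_if_locally_null) (auto simp: msupport_def not_less)
  then have "emeasure M (\<Union>n. cball 0 (real n)) = 0"
    using sets by (intro emeasure_UN_eq_0) auto
  moreover have "(\<Union>n. cball (0::real) (real n)) = space M"
    using sets_eq_imp_space_eq[OF sets] real_arch_simple by (auto simp: dist_real_def)
  ultimately show False
    using prob_space.emeasure_space_1[OF P] by simp
qed

lemma msupport_nonneg:
  assumes sets: "sets M = sets borel" and AE: "AE x in M. 0 \<le> x" and x: "x \<in> msupport M"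
  shows "0 \<le> x"
proof (rule ccontr)
  assume "\<not> 0 \<le> x"
  then have "emeasure M (ball x (- x)) > 0"
    using x unfolding msupport_def by simp
  moreover have "emeasure M (ball x (- x)) = 0"
  proof (rule emeasure_eq_0)
    have space: "space M = UNIV"
      using sets_eq_imp_space_eq[OF sets] by simp
    show "{y \<in> space M. \<not> 0 \<le> y} \<in> sets M"
      using sets space by (simp add: not_le)
    show "emeasure M {y \<in> space M. \<not> 0 \<le> y} = 0"
      using AE sets by (subst (asm) AE_iff_measurable[OF _ refl]) auto
    show "ball x (- x) \<subseteq> {y \<in> space M. \<not> 0 \<le> y}"
      using space by (auto simp: dist_real_def)
  qed
  ultimately show False by simp
qed

lemma Sup_msupport_nonneg:
  assumes "orth_measure lam mu w" and "compact (msupport w)"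
  shows "0 \<le> Sup (msupport w)"
proof -
  have w: "prob_space w" "sets w = sets borel" "AE x in w. 0 \<le> x"
    using assms(1) unfolding orth_measure_def by auto
  then obtain x where x: "x \<in> msupport w"
    using msupport_nonempty by blast
  then have "x \<le> Sup (msupport w)"
    using assms(2) by (intro cSup_upper bounded_imp_bdd_above compact_imp_bounded)
  then show ?thesis
    using msupport_nonneg[OF w(2,3) x] by simp
qed

section \<open>Chains with bounded rates\<close>

locale bounded_bd_chain =
  fixes lam mu :: "nat \<Rightarrow> real" and m :: "real measure" and C :: real
  assumes lam_pos: "\<And>i. lam i > 0" and mu_nonneg: "\<And>i. mu i \<ge> 0"
    and mu_pos: "\<And>i. i \<ge> 1 \<Longrightarrow> mu i > 0"
    and rates_le: "\<And>i. lam i + mu i \<le> C" and orth: "orth_measure lam mu m"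
begin

lemma lam_neq_0: "lam i \<noteq> 0"
  using lam_pos[of i] by simp

lemma bd_pi_pos: "bd_pi lam mu k > 0"
  unfolding bd_pi_def by (rule prod_pos) (use lam_pos mu_pos in auto)

lemma integrable_bdQ_mult_bdQ: "integrable m (\<lambda>x. bdQ lam mu i x * bdQ lam mu j x)"
  and integral_bdQ_mult_bdQ:
    "(\<integral>x. bdQ lam mu i x * bdQ lam mu j x \<partial>m) = (if i = j then 1 / bd_pi lam mu j else 0)"
  using orth unfolding orth_measure_def by auto

lemma bdQ_mult_power_eq:
  "bdQ lam mu i x * (- x) ^ k = (\<Sum>l<Suc k. pow_coeff lam mu k l * (bdQ lam mu i x * bdQ lam mu l x))"
  using power_eq_sum_pow_coeff_bdQ[of lam x k mu] lam_pos
  by (simp add: less_imp_neq[symmetric] sum_distrib_left algebra_simps)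

lemma integrable_bdQ_mult_power: "integrable m (\<lambda>x. bdQ lam mu i x * (- x) ^ k)"
  unfolding bdQ_mult_power_eq by (intro Bochner_Integration.integrable_sum integrable_mult_right integrable_bdQ_mult_bdQ)

lemma integral_bdQ_mult_power: "(\<integral>x. bdQ lam mu i x * (- x) ^ k \<partial>m) = pow_coeff lam mu k i / bd_pi lam mu i"
proof -
  have "(\<integral>x. bdQ lam mu i x * (- x) ^ k \<partial>m)
      = (\<Sum>l<Suc k. pow_coeff lam mu k l * (if i = l then 1 / bd_pi lam mu l else 0))"
    unfolding bdQ_mult_power_eq
    by (subst Bochner_Integration.integral_sum)
       (auto intro!: integrable_mult_right integrable_bdQ_mult_bdQ simp: integral_bdQ_mult_bdQ)
  also have "\<dots> = (\<Sum>l<Suc k. if l = i then pow_coeff lam mu k l / bd_pi lam mu l else 0)"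
    by (intro sum.cong) auto
  also have "\<dots> = pow_coeff lam mu k i / bd_pi lam mu i"
    by (simp add: pow_coeff_eq_0)
  finally show ?thesis .
qed

lemma even_moment_le: "(\<integral>x. x ^ (2 * k) \<partial>m) \<le> (2 * C) ^ (2 * k)"
  using integral_bdQ_mult_power[of 0 "2 * k"]
    abs_pow_coeff_0_le[where lam=lam and mu=mu and k="2 * k", OF lam_pos mu_nonneg rates_le]
  by (simp add: bd_pi_def)

lemma integral_abs_bdQ_mult_power_le:
  "(\<integral>x. \<bar>bdQ lam mu i x * (- x) ^ k\<bar> \<partial>m) \<le> (1 / bd_pi lam mu i + (2 * C) ^ (2 * k)) / 2"
proof -
  have moment: "integrable m (\<lambda>x. x ^ (2 * k))"
    using integrable_bdQ_mult_power[of 0 "2 * k"] by simp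
  have "(\<integral>x. \<bar>bdQ lam mu i x * (- x) ^ k\<bar> \<partial>m)
      \<le> (\<integral>x. (bdQ lam mu i x * bdQ lam mu i x + x ^ (2 * k)) / 2 \<partial>m)"
  proof (rule integral_mono)
    show "integrable m (\<lambda>x. \<bar>bdQ lam mu i x * (- x) ^ k\<bar>)"
      by (rule integrable_abs[OF integrable_bdQ_mult_power])
    show "integrable m (\<lambda>x. (bdQ lam mu i x * bdQ lam mu i x + x ^ (2 * k)) / 2)"
      by (intro integrable_divide_zero Bochner_Integration.integrable_add integrable_bdQ_mult_bdQ moment)
    fix x :: real
    have "\<bar>(- x) ^ k\<bar>\<^sup>2 = x ^ (2 * k)"
      by (simp add: power_even_abs power_mult[symmetric] mult.commute)
    then show "\<bar>bdQ lam mu i x * (- x) ^ k\<bar> \<le> (bdQ lam mu i x * bdQ lam mu i x + x ^ (2 * k)) / 2"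
      using sum_squares_bound[of "\<bar>bdQ lam mu i x\<bar>" "\<bar>(- x) ^ k\<bar>"]
      by (simp add: abs_mult power2_eq_square)
  qed
  also have "\<dots> = (1 / bd_pi lam mu i + (\<integral>x. x ^ (2 * k) \<partial>m)) / 2"
    by (simp add: integrable_bdQ_mult_bdQ moment integral_bdQ_mult_bdQ)
  also have "\<dots> \<le> (1 / bd_pi lam mu i + (2 * C) ^ (2 * k)) / 2"
    using even_moment_le by simp
  finally show ?thesis .
qed

lemma summable_integral_norm_power_exp_terms:
  assumes t: "0 \<le> t"
  shows "summable (\<lambda>j. \<integral>x. norm (t ^ j / fact j * (bdQ lam mu i x * (- x) ^ (q + j))) \<partial>m)"
proof (rule summable_comparison_test')
  define g where "g j = inverse (fact j) * t ^ j * (1 / bd_pi lam mu i / 2)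
      + inverse (fact j) * (t * (2 * C) ^ 2) ^ j * ((2 * C) ^ (2 * q) / 2)" for j
  show "summable g"
    unfolding g_def by (intro summable_add summable_mult2 summable_exp)
  fix j
  have "(\<integral>x. norm (t ^ j / fact j * (bdQ lam mu i x * (- x) ^ (q + j))) \<partial>m)
      = t ^ j / fact j * (\<integral>x. \<bar>bdQ lam mu i x * (- x) ^ (q + j)\<bar> \<partial>m)"
    using t by (simp add: abs_mult)
  also have "\<dots> \<le> t ^ j / fact j * ((1 / bd_pi lam mu i + (2 * C) ^ (2 * (q + j))) / 2)"
    using t by (intro mult_left_mono integral_abs_bdQ_mult_power_le) auto
  also have "\<dots> = g j"
  proof -
    have "(2 * C) ^ (2 * (q + j)) = (2 * C) ^ (2 * q) * ((2 * C) ^ 2) ^ j"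
      by (simp only: distrib_left power_add power_mult)
    moreover have "(a::real) / b * ((P + A * B) / 2) = inverse b * a * (P / 2) + inverse b * (a * B) * (A / 2)"
      for a b P A B
      unfolding divide_inverse by algebra
    ultimately show ?thesis
      unfolding g_def power_mult_distrib[of t] by simp
  qed
  finally show "norm (\<integral>x. norm (t ^ j / fact j * (bdQ lam mu i x * (- x) ^ (q + j))) \<partial>m) \<le> g j"
    by simp
qed

lemma integral_bdQ_power_exp_sums:
  assumes t: "0 \<le> t"
  shows "(\<lambda>j. t ^ j / fact j * (pow_coeff lam mu (q + j) i / bd_pi lam mu i)) sums
           (\<integral>x. bdQ lam mu i x * (- x) ^ q * exp (- (t * x)) \<partial>m)"
    and "integrable m (\<lambda>x. bdQ lam mu i x * (- x) ^ q * exp (- (t * x)))"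
proof -
  define f where "f j x = t ^ j / fact j * (bdQ lam mu i x * (- x) ^ (q + j))" for j x
  have f_sums: "(\<lambda>j. f j x) sums (bdQ lam mu i x * (- x) ^ q * exp (- (t * x)))" for x :: real
    using sums_mult[OF power_exp_sums[where y="- x" and t=t and q=q], of "bdQ lam mu i x"]
    by (simp add: f_def mult_ac)
  have "summable (\<lambda>j. norm (f j x))" for x :: real
  proof -
    have "norm (f j x) = \<bar>bdQ lam mu i x\<bar> * (t ^ j / fact j * \<bar>x\<bar> ^ (q + j))" for j
      using t by (simp add: f_def abs_mult power_abs)
    then show ?thesis
      using summable_mult[OF sums_summable[OF power_exp_sums[where y="\<bar>x\<bar>" and t=t and q=q]]]
      by simp
  qed
  moreover have "integrable m (f j)" for j
    unfolding f_def by (intro integrable_mult_right integrable_bdQ_mult_power)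
  moreover have "summable (\<lambda>j. \<integral>x. norm (f j x) \<partial>m)"
    unfolding f_def by (rule summable_integral_norm_power_exp_terms[OF t])
  moreover have "(\<lambda>x. \<Sum>j. f j x) = (\<lambda>x. bdQ lam mu i x * (- x) ^ q * exp (- (t * x)))"
    using f_sums by (simp add: sums_iff)
  moreover have "integral\<^sup>L m (f j) = t ^ j / fact j * (pow_coeff lam mu (q + j) i / bd_pi lam mu i)" for j
    by (simp add: f_def[abs_def] integral_bdQ_mult_power)
  ultimately show "(\<lambda>j. t ^ j / fact j * (pow_coeff lam mu (q + j) i / bd_pi lam mu i)) sums
           (\<integral>x. bdQ lam mu i x * (- x) ^ q * exp (- (t * x)) \<partial>m)"
    and "integrable m (\<lambda>x. bdQ lam mu i x * (- x) ^ q * exp (- (t * x)))"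
    using sums_integral[of m f] integrable_suminf[of m f] by simp_all
qed

text \<open>\<open>exp_coeff t q i\<close> is the coefficient of Q_i in the expansion of (-x)^q exp(-tx).\<close>

definition exp_coeff :: "real \<Rightarrow> nat \<Rightarrow> nat \<Rightarrow> real" where
  "exp_coeff t q i = bd_pi lam mu i * (\<integral>x. bdQ lam mu i x * (- x) ^ q * exp (- (t * x)) \<partial>m)"

lemma exp_coeff_sums:
  assumes "0 \<le> t"
  shows "(\<lambda>j. t ^ j / fact j * pow_coeff lam mu (q + j) i) sums exp_coeff t q i"
proof -
  have "(\<lambda>j. bd_pi lam mu i * (t ^ j / fact j * (pow_coeff lam mu (q + j) i / bd_pi lam mu i)))
      sums exp_coeff t q i"
    unfolding exp_coeff_def by (rule sums_mult[OF integral_bdQ_power_exp_sums(1)[OF assms]])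
  then show ?thesis
    using bd_pi_pos[of i] by simp
qed

text \<open>\<open>Psi \<alpha> N t a i\<close> is the paper's \<open>\<Psi>\<close> evaluated at \<open>i\<close>, with \<open>a\<close> standing for the exponent
  \<open>n + 1 - k\<close> (resp. \<open>n - k\<close>).\<close>

definition Psi :: "(nat \<Rightarrow> real) \<Rightarrow> nat \<Rightarrow> real \<Rightarrow> nat \<Rightarrow> nat \<Rightarrow> real" where
  "Psi \<alpha> N t a i = (\<integral>x. bd_pi lam mu i * bdQ lam mu i x * (- x) ^ a * psi \<alpha> N t x \<partial>m)"

lemma Psi_eq_sum_exp_coeff:
  assumes t: "0 \<le> t"
  shows "Psi \<alpha> N t a i = (\<Sum>p<Suc N. psi_coeff \<alpha> N p * exp_coeff t (a + p) i)"
proof -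
  have "(\<lambda>x. bd_pi lam mu i * bdQ lam mu i x * (- x) ^ a * psi \<alpha> N t x)
      = (\<lambda>x. \<Sum>p<Suc N. psi_coeff \<alpha> N p * bd_pi lam mu i *
               (bdQ lam mu i x * (- x) ^ (a + p) * exp (- (t * x))))"
    by (simp add: psi_eq_sum_psi_coeff sum_distrib_left sum_distrib_right power_add mult_ac
        del: sum.lessThan_Suc)
  then have "Psi \<alpha> N t a i
      = (\<Sum>p<Suc N. \<integral>x. psi_coeff \<alpha> N p * bd_pi lam mu i *
           (bdQ lam mu i x * (- x) ^ (a + p) * exp (- (t * x))) \<partial>m)"
    by (simp add: Psi_def Bochner_Integration.integral_sum integral_bdQ_power_exp_sums(2)[OF t])
  then show ?thesis
    by (simp add: exp_coeff_def mult.assoc)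
qed

lemma truncated_exp_expansion_sums:
  fixes u :: complex
  assumes t: "0 \<le> t"
  shows "(\<lambda>j. of_real (t ^ j / fact j) *
            ((\<Sum>i<M. of_real (pow_coeff lam mu (q + j) i) * bdQ lam mu i u) - (- u) ^ (q + j)))
         sums ((\<Sum>i<M. of_real (exp_coeff t q i) * bdQ lam mu i u) - (- u) ^ q * exp (- (of_real t * u)))"
proof -
  have "(\<lambda>j. (\<Sum>i<M. of_real (t ^ j / fact j * pow_coeff lam mu (q + j) i) * bdQ lam mu i u)
           - of_real (t ^ j / fact j) * (- u) ^ (q + j))
        sums ((\<Sum>i<M. of_real (exp_coeff t q i) * bdQ lam mu i u) - (- u) ^ q * exp (- (of_real t * u)))"
    using power_exp_sums[where y="- u" and t=t and q=q]
    by (intro sums_diff sums_sum sums_mult2 sums_of_real exp_coeff_sums t) simp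
  then show ?thesis
    by (simp add: sum_distrib_left right_diff_distrib mult_ac)
qed

lemma norm_truncated_exp_expansion_le:
  fixes u :: complex
  assumes t: "0 \<le> t" and u: "norm u \<le> \<rho>"
  shows "norm ((\<Sum>i<M. of_real (exp_coeff t q i) * bdQ lam mu i u) - (- u) ^ q * exp (- (of_real t * u)))
     \<le> 2 * (\<rho> + 2 * C) ^ q * exp_tail (t * (\<rho> + 2 * C)) (M - q)"
proof (rule norm_sums_le[OF truncated_exp_expansion_sums[OF t] sums_mult[OF exp_tail_sums]])
  fix j
  have "norm (of_real (t ^ j / fact j) *
          ((\<Sum>i<M. of_real (pow_coeff lam mu (q + j) i) * bdQ lam mu i u) - (- u) ^ (q + j)))
      = t ^ j / fact j * norm ((\<Sum>i<M. of_real (pow_coeff lam mu (q + j) i) * bdQ lam mu i u) - (- u) ^ (q + j))"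
    using t by (simp only: norm_mult norm_of_real abs_of_nonneg[of "t ^ j / fact j"]) simp
  also have "\<dots> \<le> t ^ j / fact j * (if q + j < M then 0 else 2 * (\<rho> + 2 * C) ^ (q + j))"
    using t by (intro mult_left_mono norm_truncated_power_expansion_le[OF lam_pos mu_nonneg rates_le u]) auto
  also have "\<dots> = 2 * (\<rho> + 2 * C) ^ q * (if M - q \<le> j then (t * (\<rho> + 2 * C)) ^ j / fact j else 0)"
    by (auto simp: power_add power_mult_distrib)
  finally show "norm (of_real (t ^ j / fact j) *
          ((\<Sum>i<M. of_real (pow_coeff lam mu (q + j) i) * bdQ lam mu i u) - (- u) ^ (q + j)))
      \<le> 2 * (\<rho> + 2 * C) ^ q * (if M - q \<le> j then (t * (\<rho> + 2 * C)) ^ j / fact j else 0)" .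
qed

lemma uniform_limit_exp_expansion:
  assumes t: "0 \<le> t"
  shows "uniform_limit (cball 0 \<rho>) (\<lambda>M u. \<Sum>i<M. of_real (exp_coeff t q i) * bdQ lam mu i u)
           (\<lambda>u::complex. (- u) ^ q * exp (- (of_real t * u))) sequentially"
proof (rule uniform_limitI)
  fix e :: real
  assume "0 < e"
  moreover have "(\<lambda>M. 2 * (\<rho> + 2 * C) ^ q * exp_tail (t * (\<rho> + 2 * C)) (M - q)) \<longlonglongrightarrow> 0"
    using tendsto_mult_right_zero[OF exp_tail_shift_tendsto_0] by blast
  ultimately have "\<forall>\<^sub>F M in sequentially. 2 * (\<rho> + 2 * C) ^ q * exp_tail (t * (\<rho> + 2 * C)) (M - q) < e"
    by (rule order_tendstoD(2)[rotated])
  then show "\<forall>\<^sub>F M in sequentially. \<forall>u::complex\<in>cball 0 \<rho>.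
      dist (\<Sum>i<M. of_real (exp_coeff t q i) * bdQ lam mu i u) ((- u) ^ q * exp (- (of_real t * u))) < e"
  proof (rule eventually_mono)
    fix M
    assume M: "2 * (\<rho> + 2 * C) ^ q * exp_tail (t * (\<rho> + 2 * C)) (M - q) < e"
    show "\<forall>u::complex\<in>cball 0 \<rho>.
      dist (\<Sum>i<M. of_real (exp_coeff t q i) * bdQ lam mu i u) ((- u) ^ q * exp (- (of_real t * u))) < e"
    proof
      fix u :: complex
      assume "u \<in> cball 0 \<rho>"
      then have "norm ((\<Sum>i<M. of_real (exp_coeff t q i) * bdQ lam mu i u) - (- u) ^ q * exp (- (of_real t * u)))
          \<le> 2 * (\<rho> + 2 * C) ^ q * exp_tail (t * (\<rho> + 2 * C)) (M - q)"
        by (intro norm_truncated_exp_expansion_le[OF t]) simp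
      with M show "dist (\<Sum>i<M. of_real (exp_coeff t q i) * bdQ lam mu i u)
          ((- u) ^ q * exp (- (of_real t * u))) < e"
        by (simp add: dist_norm)
    qed
  qed
qed

lemma uniform_limit_Psi_expansion:
  assumes t: "0 \<le> t"
  shows "uniform_limit (cball 0 \<rho>)
           (\<lambda>M u. \<Sum>i<M. of_real (Psi \<alpha> N t a i) * bdQ lam mu i u)
           (\<lambda>u::complex. (- u) ^ a * psi \<alpha> N t u) sequentially"
proof -
  have "uniform_limit (cball 0 \<rho>)
           (\<lambda>M u. \<Sum>p<Suc N. of_real (psi_coeff \<alpha> N p) *
                    (\<Sum>i<M. of_real (exp_coeff t (a + p) i) * bdQ lam mu i u))
           (\<lambda>u::complex. \<Sum>p<Suc N. of_real (psi_coeff \<alpha> N p) * ((- u) ^ (a + p) * exp (- (of_real t * u))))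
           sequentially"
    by (intro uniform_limit_sum uniform_limit_intros uniform_limit_exp_expansion t) simp
  moreover have "(\<Sum>p<Suc N. of_real (psi_coeff \<alpha> N p) * (\<Sum>i<M. of_real (exp_coeff t (a + p) i) * bdQ lam mu i u))
      = (\<Sum>i<M. of_real (Psi \<alpha> N t a i) * bdQ lam mu i u)"
    for M and u :: complex
    unfolding Psi_eq_sum_exp_coeff[OF t]
    by (simp add: sum_distrib_left sum_distrib_right mult_ac del: sum.lessThan_Suc) (rule sum.swap)
  moreover have "(\<Sum>p<Suc N. of_real (psi_coeff \<alpha> N p) * ((- u) ^ (a + p) * exp (- (of_real t * u))))
      = (- u) ^ a * psi \<alpha> N t u" for u :: complex
    by (simp add: psi_eq_sum_psi_coeff sum_distrib_left sum_distrib_right power_add mult_ac del: sum.lessThan_Suc)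
  ultimately show ?thesis by simp
qed

lemma circlepath_Psi_expansion_sums:
  assumes t: "0 \<le> t" and r: "0 < r"
    and phi: "continuous_on (sphere 0 r) phi"
    and int: "\<And>i. (\<lambda>u. bdQ lam mu i u * phi u) contour_integrable_on circlepath 0 r"
  shows "(\<lambda>i. of_real (Psi \<alpha> N t a i)
              * contour_integral (circlepath 0 r) (\<lambda>u. bdQ lam mu i u * phi u))
         sums contour_integral (circlepath 0 r) (\<lambda>u. (- u) ^ a * psi \<alpha> N t u * phi u)"
proof -
  define c where "c i = complex_of_real (Psi \<alpha> N t a i)" for i
  define S where "S M u = (\<Sum>i<M. c i * bdQ lam mu i u)" for M u
  have partial: "(\<Sum>i<M. c i * contour_integral (circlepath 0 r) (\<lambda>u. bdQ lam mu i u * phi u))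
      = contour_integral (circlepath 0 r) (\<lambda>u. S M u * phi u)" for M
    by (simp add: S_def sum_distrib_right mult.assoc contour_integral_sum contour_integral_lmul
        contour_integrable_lmul int)
  have int_S: "(\<lambda>u. S M u * phi u) contour_integrable_on circlepath 0 r" for M
    unfolding S_def sum_distrib_right mult.assoc
    by (intro contour_integrable_sum contour_integrable_lmul int) simp
  have "continuous_on (sphere 0 r) (\<lambda>u::complex. (- u) ^ a * psi \<alpha> N t u)"
    by (intro continuous_intros holomorphic_on_imp_continuous_on holomorphic_on_psi)
  then have "uniform_limit (sphere 0 r) (\<lambda>M u. S M u * phi u) (\<lambda>u. (- u) ^ a * psi \<alpha> N t u * phi u) sequentially"
    using uniform_limit_on_subset[OF uniform_limit_Psi_expansion[OF t] sphere_cball] phi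
    by (intro uniform_lim_mult uniform_limit_const compact_imp_bounded compact_continuous_image)
       (simp_all add: S_def c_def)
  then have "(\<lambda>M. contour_integral (circlepath 0 r) (\<lambda>u. S M u * phi u))
      \<longlonglongrightarrow> contour_integral (circlepath 0 r) (\<lambda>u. (- u) ^ a * psi \<alpha> N t u * phi u)"
    using r int_S by (intro contour_integral_uniform_limit_circlepath(2) always_eventually allI) auto
  then show ?thesis
    unfolding sums_def c_def[symmetric] partial .
qed

lemma circlepath_biorthogonality_sums:
  assumes t: "0 \<le> t" and r: "0 < r" and psi_nz: "\<And>u. u \<in> sphere 0 r \<Longrightarrow> psi \<alpha> N t u \<noteq> (0::complex)"
  shows "(\<lambda>i. of_real (Psi \<alpha> N t a i) *
            contour_integral (circlepath 0 r) (\<lambda>u. bdQ lam mu i u / (psi \<alpha> N t u * (- u) ^ Suc b)))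
         sums (if a = b then - (2 * pi * \<i>) else 0)"
proof -
  define phi where "phi u = 1 / (psi \<alpha> N t u * (- u) ^ Suc b)" for u :: complex
  have phi_cont: "continuous_on (path_image (circlepath 0 r)) phi"
    unfolding phi_def using psi_nz r
    by (intro continuous_intros holomorphic_on_imp_continuous_on holomorphic_on_psi) auto
  have "(\<lambda>u. bdQ lam mu i u * phi u) contour_integrable_on circlepath 0 r" for i
    by (intro contour_integrable_continuous_circlepath continuous_on_mult phi_cont
        holomorphic_on_imp_continuous_on holomorphic_on_bdQ lam_neq_0)
  then have "(\<lambda>i. of_real (Psi \<alpha> N t a i) * contour_integral (circlepath 0 r) (\<lambda>u. bdQ lam mu i u * phi u))
      sums contour_integral (circlepath 0 r) (\<lambda>u. (- u) ^ a * psi \<alpha> N t u * phi u)"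
    using phi_cont r by (intro circlepath_Psi_expansion_sums[OF t r]) auto
  also have "contour_integral (circlepath 0 r) (\<lambda>u. (- u) ^ a * psi \<alpha> N t u * phi u)
      = (if a = b then - (2 * pi * \<i>) else 0)"
  proof (rule contour_integral_unique, rule has_contour_integral_eq[OF circlepath_integral_power_quotient[OF r]])
    fix u :: complex
    assume "u \<in> path_image (circlepath 0 r)"
    then have "psi \<alpha> N t u \<noteq> 0" "u \<noteq> 0"
      using psi_nz r by auto
    then show "(- u) ^ a / (- u) ^ Suc b = (- u) ^ a * psi \<alpha> N t u * phi u"
      by (simp add: phi_def field_simps)
  qed
  finally show ?thesis
    by (simp add: phi_def)
qed

theorem biorthogonality_sums:
  fixes \<gamma> :: "real \<Rightarrow> complex"
  assumes t: "0 \<le> t" and \<gamma>: "pos_simple_closed_contour \<gamma>"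
    and inside0: "0 \<in> inside (path_image \<gamma>)"
    and zeros: "\<And>z. psi \<alpha> N t z = (0::complex) \<Longrightarrow> z \<notin> inside (path_image \<gamma>) \<and> z \<notin> path_image \<gamma>"
  shows "(\<lambda>i. complex_of_real (Psi \<alpha> N t a i)
            * (- (1 / (2 * of_real pi * \<i>)) *
               cint \<gamma> (\<lambda>u. bdQ lam mu i u / (psi \<alpha> N t u * (- u) ^ Suc b))))
         sums (if a = b then 1 else 0)"
proof -
  let ?f = "\<lambda>i u. bdQ lam mu i u / (psi \<alpha> N t u * (- u) ^ Suc b)"
  let ?k = "- (1 / (2 * of_real pi * \<i>))"
  define Z where "Z = {z::complex. psi \<alpha> N t z = 0}"
  have Z: "finite Z" "0 \<notin> Z"
    using finite_psi_zeros by (auto simp: Z_def psi_def)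
  then obtain r where r: "0 < r" "cball 0 r \<subseteq> - Z"
    using open_contains_cball[of "- Z"] by (auto simp: finite_imp_closed open_Compl)
  have "?f i holomorphic_on (- Z - {0})" for i
    by (auto simp: Z_def intro!: holomorphic_intros holomorphic_on_bdQ holomorphic_on_psi lam_neq_0)
  then have cint_circle: "cint \<gamma> (?f i) = contour_integral (circlepath 0 r) (?f i)" for i
    using zeros by (intro cint_eq_small_circlepath[OF \<gamma> inside0 Z(1) _ r]) (auto simp: Z_def)
  have "(\<lambda>i. of_real (Psi \<alpha> N t a i) * contour_integral (circlepath 0 r) (?f i))
      sums (if a = b then - (2 * pi * \<i>) else 0)"
    using r by (intro circlepath_biorthogonality_sums[OF t r(1)]) (auto simp: Z_def)
  then have "(\<lambda>i. ?k * (of_real (Psi \<alpha> N t a i) * contour_integral (circlepath 0 r) (?f i)))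
      sums (?k * (if a = b then - (2 * pi * \<i>) else 0))"
    by (rule sums_mult)
  also have "?k * (if a = b then - (2 * pi * \<i>) else 0) = (if a = b then 1 else 0)"
    by simp
  finally show ?thesis
    unfolding cint_circle by (simp only: mult_ac)
qed
end

lemma bounded_bd_chainI:
  assumes "\<And>i. lam i > 0" and "mu 0 \<ge> 0" and "\<And>i. i \<ge> 1 \<Longrightarrow> mu i > 0"
    and "orth_measure lam mu m" and "bdd_above (range (\<lambda>i. lam i + mu i))"
  shows "bounded_bd_chain lam mu m (SUP i. lam i + mu i)"
proof
  show "mu i \<ge> 0" for i
    using assms(2) assms(3)[of i] by (cases i) auto
  show "lam i + mu i \<le> (SUP i. lam i + mu i)" for i
    using assms(5) by (rule cSUP_upper[OF UNIV_I])
qed (use assms in auto)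

theorem lemma10p2:
  fixes lam mu :: "nat \<Rightarrow> real" and w w_hat :: "real measure"
    and alpha :: "nat \<Rightarrow> real" and N :: nat and t :: real
    and \<gamma> :: "real \<Rightarrow> complex"
  assumes lam_pos: "\<And>k. lam k > 0"
    and mu0: "mu 0 = 0"
    and mu_pos: "\<And>k. k \<ge> 1 \<Longrightarrow> mu k > 0"
    and div1: "(\<Sum>j. ennreal (1 / (lam j * bd_pi lam mu j)) *
                   ennreal (\<Sum>i\<le>j. bd_pi lam mu i)) = \<infinity>"
    and div2: "(\<Sum>j. ennreal (1 / (lam j * bd_pi lam mu j)) *
                   (\<Sum>i. if j < i then ennreal (bd_pi lam mu i) else 0)) = \<infinity>"
    and w_orth: "orth_measure lam mu w"
    and w_unique: "\<And>m. orth_measure lam mu m \<Longrightarrow> m = w"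
    and wh_orth: "orth_measure (dual_lam lam mu) (dual_mu lam mu) w_hat"
    and wh_unique: "\<And>m. orth_measure (dual_lam lam mu) (dual_mu lam mu) m \<Longrightarrow> m = w_hat"
    and compact_supp: "compact (msupport w)"
    and C_fin: "bdd_above (range (\<lambda>i. lam i + mu i))"
    and Ch_fin: "bdd_above (range (\<lambda>i. dual_lam lam mu i + dual_mu lam mu i))"
    and alpha_top: "N \<ge> 1 \<Longrightarrow> alpha 1 \<le> min (1 / (SUP i. lam i + mu i))
                                          (1 / (SUP i. dual_lam lam mu i + dual_mu lam mu i)) / 2"
    and alpha_mono: "\<And>i j. 1 \<le> i \<Longrightarrow> i \<le> j \<Longrightarrow> j \<le> N \<Longrightarrow> alpha j \<le> alpha i"
    and alpha_nonneg: "\<And>i. 1 \<le> i \<Longrightarrow> i \<le> N \<Longrightarrow> 0 \<le> alpha i"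
    and t_nonneg: "t \<ge> 0"
    and contour: "pos_simple_closed_contour \<gamma>"
    and encl: "\<And>x. 0 \<le> x \<Longrightarrow> x \<le> Sup (msupport w) \<Longrightarrow> complex_of_real x \<in> inside (path_image \<gamma>)"
    and no_zero: "\<And>z. psi alpha N t z = (0::complex) \<Longrightarrow>
                     z \<notin> inside (path_image \<gamma>) \<and> z \<notin> path_image \<gamma>"
  shows
    "(\<forall>n k l. 1 \<le> k \<and> k \<le> n + 1 \<and> 1 \<le> l \<and> l \<le> n + 1 \<longrightarrow>
       (\<lambda>i. complex_of_real
              (\<integral>x. bd_pi lam mu i * bdQ lam mu i x * (- x) ^ (n + 1 - k) * psi alpha N t x \<partial>w)
            * (- (1 / (2 * of_real pi * \<i>)) *
               cint \<gamma> (\<lambda>u. bdQ lam mu i u / (psi alpha N t u * (- u) ^ (n + 2 - l)))))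
       sums (if k = l then 1 else 0))
   \<and> (\<forall>n k l. 1 \<le> n \<and> 1 \<le> k \<and> k \<le> n \<and> 1 \<le> l \<and> l \<le> n \<longrightarrow>
       (\<lambda>i. complex_of_real
              (\<integral>x. bd_pi (dual_lam lam mu) (dual_mu lam mu) i
                    * bdQ (dual_lam lam mu) (dual_mu lam mu) i x * (- x) ^ (n - k)
                    * psi alpha N t x \<partial>w_hat)
            * (- (1 / (2 * of_real pi * \<i>)) *
               cint \<gamma> (\<lambda>u. bdQ (dual_lam lam mu) (dual_mu lam mu) i u
                              / (psi alpha N t u * (- u) ^ (n - l + 1)))))
       sums (if k = l then 1 else 0))"
proof -
  interpret primal: bounded_bd_chain lam mu w "SUP i. lam i + mu i"
    using lam_pos mu0 mu_pos w_orth C_fin by (intro bounded_bd_chainI) auto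
  interpret dual: bounded_bd_chain "dual_lam lam mu" "dual_mu lam mu" w_hat
      "SUP i. dual_lam lam mu i + dual_mu lam mu i"
    using lam_pos mu_pos wh_orth Ch_fin
    by (intro bounded_bd_chainI) (auto simp: dual_lam_def dual_mu_def less_imp_le)
  have inside0: "(0::complex) \<in> inside (path_image \<gamma>)"
    using encl[of 0] Sup_msupport_nonneg[OF w_orth compact_supp] by simp
  note primal_sums =
    primal.biorthogonality_sums[OF t_nonneg contour inside0 no_zero, unfolded primal.Psi_def]
  note dual_sums =
    dual.biorthogonality_sums[OF t_nonneg contour inside0 no_zero, unfolded dual.Psi_def]
  show ?thesis (is "(\<forall>n k l. _ \<longrightarrow> ?primal n k l) \<and> (\<forall>n k l. _ \<longrightarrow> ?dual n k l)")
  proof (intro conjI allI impI)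
    fix n k l :: nat
    assume "1 \<le> k \<and> k \<le> n + 1 \<and> 1 \<le> l \<and> l \<le> n + 1"
    then have e: "n + 2 - l = Suc (n + 1 - l)" "(k = l) = (n + 1 - k = n + 1 - l)"
      by auto
    show "?primal n k l"
      unfolding e by (rule primal_sums)
  next
    fix n k l :: nat
    assume "1 \<le> n \<and> 1 \<le> k \<and> k \<le> n \<and> 1 \<le> l \<and> l \<le> n"
    then have e: "n - l + 1 = Suc (n - l)" "(k = l) = (n - k = n - l)"
      by auto
    show "?dual n k l"
      unfolding e by (rule dual_sums)
  qed
qed

end
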